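(* Let $\alpha$ be an ordinal such that $(T_\alpha,P_\alpha)$ is consistent. Then for every $\mathcal L$-sentence $\varphi$ with $\#\varphi\in P_1^+$, we have $(\mathbb N,T_\alpha,P_\alpha)\not\models_{SK}\varphi\vee\neg\varphi$.
   Context: Language. Let $\mathcal L_{\mathbb N}$ be the language of first-order Peano arithmetic and $\mathcal L=\mathcal L_{\mathbb N}\cup\{\mathrm T,\mathrm P\}$ with unary predicates $\mathrm T,\mathrm P$. $\mathcal L$-formulas are in Tait style: literals are $s=t$, $s\neq t$, $\mathrm Tt$, $\neg\mathrm Tt$, $\mathrm Pt$, $\neg\mathrm Pt$; formulas are built from literals by $\wedge,\vee,\forall,\exists$; negation of an arbitrary formula is defined by De Morgan dualities with $\neg\neg\varphi:=\varphi$. A standard Gödel numbering is fixed; $\#e$ is the code of $e$, $\ulcorner e\urcorner$ the numeral of $\#e$, $\mathrm{val}(t)$ the value of a closed term $t$, $\dot\neg$ the primitive recursive function with $\dot\neg(\#\varphi)=\#\neg\varphi$; $\mathrm T\varphi,\mathrm P\varphi$ abbreviate $\mathrm T\ulcorner\varphi\urcorner,\mathrm P\ulcorner\varphi\urcorner$. Semantics. A partial model is $(\mathbb N,T,P)$ with $\mathbb N$ the standard model and $T=(T^+,T^-)$, $P=(P^+,P^-)$ pairs of subsets of $\omega$. Strong Kleene satisfaction $\models_{SK}$: arithmetic literals evaluated in $\mathbb N$; $\mathrm Tt$ satisfied iff $\mathrm{val}(t)\in T^+$, $\neg\mathrm Tt$ iff $\mathrm{val}(t)\in T^-$, likewise for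 $\mathrm P$ with $P^\pm$; conjunction iff both, disjunction iff at least one, $\forall x\varphi(x)$ iff all numeral instances, $\exists x\varphi(x)$ iff some numeral instance. $(T,P)$ is consistent iff $T^+\cap T^-=\emptyset$ and $P^+\cap P^-=\emptyset$. Base paradoxicality. $\mathrm{PA}[\mathrm{SK}]$ is the two-sided sequent calculus for Strong Kleene logic with identity in $\mathcal L$ (initial sequents $\varphi\Rightarrow\varphi$, cut, weakening, the rule from $\Gamma\Rightarrow\Delta,\varphi$ infer $\neg\varphi,\Gamma\Rightarrow\Delta$, usual rules for $\wedge,\vee,\forall,\exists$, reflexivity $\Rightarrow t=t$, replacement from $\Gamma\Rightarrow\Delta,\varphi(t)$ infer $\Gamma\Rightarrow\Delta,s\neq t,\varphi(s)$) plus the initial sequents of Peano arithmetic and the induction rule for all $\mathcal L$-formulas. A sentence $\varphi$ is base paradoxical iff $\mathrm{PA}[\mathrm{SK}]$ derives $\varphi\Leftrightarrow\neg\mathrm T\varphi$ and $\neg\varphi\Leftrightarrow\mathrm T\varphi$ ($\Leftrightarrow$ meaning both sequents). $B(x)$ is an $\mathcal L_{\mathbb N}$-formula defining in $\mathbb N$ the set of codes of base paradoxical sentences, and $\Pi(x):=B(x)\vee B(\dot\neg x)$. Jump and sequence. Let $\mathscr P(x)$ be the $\mathcal L$-formula which is the disjunction of: (1) $x$ codes a sentence and $\Pi(x)$; (2) $x$ codes a sentence $\mathrm Tt$ ($t$ a closed term) and $\mathrm P(\mathrm{val}(t))$; (3) $x$ codes a sentence $\neg\mathrm Tt$ and $\mathrm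 P(\mathrm{val}(t))$; (4) $x$ codes a sentence $\psi\wedge\theta$ and $(\mathrm P\psi\wedge\mathrm P\theta)\vee(\mathrm T\psi\wedge\mathrm P\theta)\vee(\mathrm T\theta\wedge\mathrm P\psi)$; (5) $x$ codes a sentence $\psi\vee\theta$ and $(\mathrm P\psi\wedge\mathrm P\theta)\vee(\neg\mathrm T\psi\wedge\mathrm P\theta)\vee(\neg\mathrm T\theta\wedge\mathrm P\psi)$; (6) $x$ codes a sentence $\forall v\psi$ and $\exists y\,\mathrm P\psi(\dot y)\wedge\forall y(\mathrm P\psi(\dot y)\vee\mathrm T\psi(\dot y))$; (7) $x$ codes a sentence $\exists v\psi$ and $\exists y\,\mathrm P\psi(\dot y)\wedge\forall y(\mathrm P\psi(\dot y)\vee\neg\mathrm T\psi(\dot y))$; here $\psi(\dot y)$ is the code of the result of substituting the numeral of $y$ for $v$. Write $\mathscr P(\varphi)$ for $\mathscr P(\ulcorner\varphi\urcorner)$. Define $\Gamma_{\mathscr{TP}}(T,P)=\big((\{\#\varphi:(\mathbb N,T,P)\models_{SK}\varphi\},\{\#\varphi:(\mathbb N,T,P)\models_{SK}\neg\varphi\}),(\{\#\varphi:(\mathbb N,T,P)\models_{SK}\mathscr P(\varphi)\},\{\#\varphi:(\mathbb N,T,P)\models_{SK}\varphi\vee\neg\varphi\})\big)$, $\varphi$ ranging over $\mathcal L$-sentences. Define $(T_0,P_0)=((\emptyset,\emptyset),(\emptyset,\emptyset))$, $(T_{\beta+1},P_{\beta+1})=\Gamma_{\mathscr{TP}}(T_\beta,P_\beta)$,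 $(T_\lambda,P_\lambda)=\bigcup_{\beta<\lambda}(T_\beta,P_\beta)$ (componentwise union) for limit $\lambda$; $P_\alpha=(P_\alpha^+,P_\alpha^-)$. *)

theory Defs
  imports Main "HOL-Library.Countable"
begin

section \<open>Syntax of L = L_N + {T, P} (Tait style)\<close>

datatype trm = Var nat | Zero | Sc trm | Pl trm trm | Tm trm trm

datatype fm =
    Eq trm trm | Neq trm trm
  | Tr trm | NTr trm
  | Pr trm | NPr trm
  | Conj fm fm | Disj fm fm
  | All nat fm | Ex nat fm

instance trm :: countable by countable_datatype
instance fm :: countable by countable_datatype

text \<open>Negation defined by De Morgan dualities (so that neg (neg phi) = phi).\<close>
fun neg :: "fm \<Rightarrow> fm" where
  "neg (Eq s t) = Neq s t"
| "neg (Neq s t) = Eq s t"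
| "neg (Tr t) = NTr t"
| "neg (NTr t) = Tr t"
| "neg (Pr t) = NPr t"
| "neg (NPr t) = Pr t"
| "neg (Conj a b) = Disj (neg a) (neg b)"
| "neg (Disj a b) = Conj (neg a) (neg b)"
| "neg (All x a) = Ex x (neg a)"
| "neg (Ex x a) = All x (neg a)"

fun fvt :: "trm \<Rightarrow> nat set" where
  "fvt (Var x) = {x}"
| "fvt Zero = {}"
| "fvt (Sc t) = fvt t"
| "fvt (Pl s t) = fvt s \<union> fvt t"
| "fvt (Tm s t) = fvt s \<union> fvt t"

fun fv :: "fm \<Rightarrow> nat set" where
  "fv (Eq s t) = fvt s \<union> fvt t"
| "fv (Neq s t) = fvt s \<union> fvt t"
| "fv (Tr t) = fvt t"
| "fv (NTr t) = fvt t"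
| "fv (Pr t) = fvt t"
| "fv (NPr t) = fvt t"
| "fv (Conj a b) = fv a \<union> fv b"
| "fv (Disj a b) = fv a \<union> fv b"
| "fv (All x a) = fv a - {x}"
| "fv (Ex x a) = fv a - {x}"

definition sentence :: "fm \<Rightarrow> bool" where
  "sentence \<phi> \<longleftrightarrow> fv \<phi> = {}"

fun substt :: "nat \<Rightarrow> trm \<Rightarrow> trm \<Rightarrow> trm" where
  "substt x u (Var y) = (if y = x then u else Var y)"
| "substt x u Zero = Zero"
| "substt x u (Sc t) = Sc (substt x u t)"
| "substt x u (Pl s t) = Pl (substt x u s) (substt x u t)"
| "substt x u (Tm s t) = Tm (substt x u s) (substt x u t)"

fun subst :: "nat \<Rightarrow> trm \<Rightarrow> fm \<Rightarrow> fm" where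
  "subst x u (Eq s t) = Eq (substt x u s) (substt x u t)"
| "subst x u (Neq s t) = Neq (substt x u s) (substt x u t)"
| "subst x u (Tr t) = Tr (substt x u t)"
| "subst x u (NTr t) = NTr (substt x u t)"
| "subst x u (Pr t) = Pr (substt x u t)"
| "subst x u (NPr t) = NPr (substt x u t)"
| "subst x u (Conj a b) = Conj (subst x u a) (subst x u b)"
| "subst x u (Disj a b) = Disj (subst x u a) (subst x u b)"
| "subst x u (All y a) = (if y = x then All y a else All y (subst x u a))"
| "subst x u (Ex y a) = (if y = x then Ex y a else Ex y (subst x u a))"

fun freefor :: "nat \<Rightarrow> trm \<Rightarrow> fm \<Rightarrow> bool" where
  "freefor x u (Conj a b) = (freefor x u a \<and> freefor x u b)"
| "freefor x u (Disj a b) = (freefor x u a \<and> freefor x u b)"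
| "freefor x u (All y a) = (x \<notin> fv (All y a) \<or> (y \<notin> fvt u \<and> freefor x u a))"
| "freefor x u (Ex y a) = (x \<notin> fv (Ex y a) \<or> (y \<notin> fvt u \<and> freefor x u a))"
| "freefor x u _ = True"

definition code :: "fm \<Rightarrow> nat" where
  "code \<phi> = to_nat \<phi>"

fun num :: "nat \<Rightarrow> trm" where
  "num 0 = Zero"
| "num (Suc n) = Sc (num n)"

definition quote :: "fm \<Rightarrow> trm" where
  "quote \<phi> = num (code \<phi>)"

text \<open>Value of a term in the standard model (used on closed terms only).\<close>
fun tval :: "trm \<Rightarrow> nat" where
  "tval (Var x) = 0"
| "tval Zero = 0"
| "tval (Sc t) = Suc (tval t)"
| "tval (Pl s t) = tval s + tval t"
| "tval (Tm s t) = tval s * tval t"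

section \<open>Strong Kleene satisfaction in partial models (N, T, P)\<close>

type_synonym ext = "nat set \<times> nat set"  \<comment> \<open>(extension, anti-extension)\<close>

inductive sk :: "ext \<Rightarrow> ext \<Rightarrow> fm \<Rightarrow> bool" for T :: ext and P :: ext where
  sk_eq: "tval s = tval t \<Longrightarrow> sk T P (Eq s t)"
| sk_neq: "tval s \<noteq> tval t \<Longrightarrow> sk T P (Neq s t)"
| sk_T: "tval t \<in> fst T \<Longrightarrow> sk T P (Tr t)"
| sk_NT: "tval t \<in> snd T \<Longrightarrow> sk T P (NTr t)"
| sk_P: "tval t \<in> fst P \<Longrightarrow> sk T P (Pr t)"
| sk_NP: "tval t \<in> snd P \<Longrightarrow> sk T P (NPr t)"
| sk_conj: "sk T P a \<Longrightarrow> sk T P b \<Longrightarrow> sk T P (Conj a b)"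
| sk_disj1: "sk T P a \<Longrightarrow> sk T P (Disj a b)"
| sk_disj2: "sk T P b \<Longrightarrow> sk T P (Disj a b)"
| sk_all: "(\<forall>n. sk T P (subst x (num n) a)) \<Longrightarrow> sk T P (All x a)"
| sk_ex: "sk T P (subst x (num n) a) \<Longrightarrow> sk T P (Ex x a)"

definition consistent :: "ext \<Rightarrow> ext \<Rightarrow> bool" where
  "consistent T P \<longleftrightarrow> fst T \<inter> snd T = {} \<and> fst P \<inter> snd P = {}"

section \<open>The calculus PA[SK]\<close>

inductive pa_sk :: "fm set \<Rightarrow> fm set \<Rightarrow> bool" where
  init: "pa_sk {\<phi>} {\<phi>}"
| cut: "pa_sk \<Gamma> (insert \<phi> \<Delta>) \<Longrightarrow> pa_sk (insert \<phi> \<Gamma>') \<Delta>' \<Longrightarrow> pa_sk (\<Gamma> \<union> \<Gamma>') (\<Delta> \<union> \<Delta>')"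
| weak: "pa_sk \<Gamma> \<Delta> \<Longrightarrow> finite \<Gamma>' \<Longrightarrow> finite \<Delta>' \<Longrightarrow> pa_sk (\<Gamma> \<union> \<Gamma>') (\<Delta> \<union> \<Delta>')"
| negL: "pa_sk \<Gamma> (insert \<phi> \<Delta>) \<Longrightarrow> pa_sk (insert (neg \<phi>) \<Gamma>) \<Delta>"
| conjL: "pa_sk (insert \<phi> (insert \<psi> \<Gamma>)) \<Delta> \<Longrightarrow> pa_sk (insert (Conj \<phi> \<psi>) \<Gamma>) \<Delta>"
| conjR: "pa_sk \<Gamma> (insert \<phi> \<Delta>) \<Longrightarrow> pa_sk \<Gamma> (insert \<psi> \<Delta>) \<Longrightarrow> pa_sk \<Gamma> (insert (Conj \<phi> \<psi>) \<Delta>)"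
| disjL: "pa_sk (insert \<phi> \<Gamma>) \<Delta> \<Longrightarrow> pa_sk (insert \<psi> \<Gamma>) \<Delta> \<Longrightarrow> pa_sk (insert (Disj \<phi> \<psi>) \<Gamma>) \<Delta>"
| disjR: "pa_sk \<Gamma> (insert \<phi> (insert \<psi> \<Delta>)) \<Longrightarrow> pa_sk \<Gamma> (insert (Disj \<phi> \<psi>) \<Delta>)"
| allL: "freefor x t \<phi> \<Longrightarrow> pa_sk (insert (subst x t \<phi>) \<Gamma>) \<Delta> \<Longrightarrow> pa_sk (insert (All x \<phi>) \<Gamma>) \<Delta>"
| allR: "y \<notin> \<Union>(fv ` \<Gamma>) \<Longrightarrow> y \<notin> \<Union>(fv ` \<Delta>) \<Longrightarrow> y \<notin> fv (All x \<phi>) \<Longrightarrow> freefor x (Var y) \<phi> \<Longrightarrow>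
         pa_sk \<Gamma> (insert (subst x (Var y) \<phi>) \<Delta>) \<Longrightarrow> pa_sk \<Gamma> (insert (All x \<phi>) \<Delta>)"
| exL: "y \<notin> \<Union>(fv ` \<Gamma>) \<Longrightarrow> y \<notin> \<Union>(fv ` \<Delta>) \<Longrightarrow> y \<notin> fv (Ex x \<phi>) \<Longrightarrow> freefor x (Var y) \<phi> \<Longrightarrow>
         pa_sk (insert (subst x (Var y) \<phi>) \<Gamma>) \<Delta> \<Longrightarrow> pa_sk (insert (Ex x \<phi>) \<Gamma>) \<Delta>"
| exR: "freefor x t \<phi> \<Longrightarrow> pa_sk \<Gamma> (insert (subst x t \<phi>) \<Delta>) \<Longrightarrow> pa_sk \<Gamma> (insert (Ex x \<phi>) \<Delta>)"
| refl: "pa_sk {} {Eq t t}"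
| repl: "freefor x s \<phi> \<Longrightarrow> freefor x t \<phi> \<Longrightarrow> pa_sk \<Gamma> (insert (subst x t \<phi>) \<Delta>) \<Longrightarrow>
         pa_sk \<Gamma> (insert (Neq s t) (insert (subst x s \<phi>) \<Delta>))"
| pa1: "pa_sk {Eq (Sc s) Zero} {}"
| pa2: "pa_sk {Eq (Sc s) (Sc t)} {Eq s t}"
| pa3: "pa_sk {} {Eq (Pl s Zero) s}"
| pa4: "pa_sk {} {Eq (Pl s (Sc t)) (Sc (Pl s t))}"
| pa5: "pa_sk {} {Eq (Tm s Zero) Zero}"
| pa6: "pa_sk {} {Eq (Tm s (Sc t)) (Pl (Tm s t) s)}"
| ind: "x \<notin> \<Union>(fv ` \<Gamma>) \<Longrightarrow> x \<notin> \<Union>(fv ` \<Delta>) \<Longrightarrow> freefor x (Sc (Var x)) \<phi> \<Longrightarrow> freefor x t \<phi> \<Longrightarrow>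
         pa_sk (insert \<phi> \<Gamma>) (insert (subst x (Sc (Var x)) \<phi>) \<Delta>) \<Longrightarrow>
         pa_sk (insert (subst x Zero \<phi>) \<Gamma>) (insert (subst x t \<phi>) \<Delta>)"

definition pa_sk_iff :: "fm \<Rightarrow> fm \<Rightarrow> bool" where
  "pa_sk_iff \<phi> \<psi> \<longleftrightarrow> pa_sk {\<phi>} {\<psi>} \<and> pa_sk {\<psi>} {\<phi>}"

definition base_paradoxical :: "fm \<Rightarrow> bool" where
  "base_paradoxical \<phi> \<longleftrightarrow> sentence \<phi> \<and>
     pa_sk_iff \<phi> (neg (Tr (quote \<phi>))) \<and> pa_sk_iff (neg \<phi>) (Tr (quote \<phi>))"

definition Pi_par :: "fm \<Rightarrow> bool" where
  "Pi_par \<phi> \<longleftrightarrow> base_paradoxical \<phi> \<or> base_paradoxical (neg \<phi>)"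

section \<open>The jump\<close>

text \<open>Strong Kleene satisfaction of the L-formula script-P applied to the numeral of
  the code of a sentence phi in (N,T,P): the disjunction of clauses (1)-(7), with the
  (bivalent) arithmetical parts evaluated in N.\<close>
definition scrP :: "ext \<Rightarrow> ext \<Rightarrow> fm \<Rightarrow> bool" where
  "scrP T P \<phi> \<longleftrightarrow>
     Pi_par \<phi>
   \<or> (\<exists>t. \<phi> = Tr t \<and> tval t \<in> fst P)
   \<or> (\<exists>t. \<phi> = NTr t \<and> tval t \<in> fst P)
   \<or> (\<exists>\<psi> \<theta>. \<phi> = Conj \<psi> \<theta> \<and>
        ((code \<psi> \<in> fst P \<and> code \<theta> \<in> fst P) \<or> (code \<psi> \<in> fst T \<and> code \<theta> \<in> fst P)
         \<or> (code \<theta> \<in> fst T \<and> code \<psi> \<in> fst P)))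
   \<or> (\<exists>\<psi> \<theta>. \<phi> = Disj \<psi> \<theta> \<and>
        ((code \<psi> \<in> fst P \<and> code \<theta> \<in> fst P) \<or> (code \<psi> \<in> snd T \<and> code \<theta> \<in> fst P)
         \<or> (code \<theta> \<in> snd T \<and> code \<psi> \<in> fst P)))
   \<or> (\<exists>v \<psi>. \<phi> = All v \<psi> \<and>
        (\<exists>y. code (subst v (num y) \<psi>) \<in> fst P) \<and>
        (\<forall>y. code (subst v (num y) \<psi>) \<in> fst P \<or> code (subst v (num y) \<psi>) \<in> fst T))
   \<or> (\<exists>v \<psi>. \<phi> = Ex v \<psi> \<and>
        (\<exists>y. code (subst v (num y) \<psi>) \<in> fst P) \<and>
        (\<forall>y. code (subst v (num y) \<psi>) \<in> fst P \<or> code (subst v (num y) \<psi>) \<in> snd T))"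

type_synonym state = "ext \<times> ext"  \<comment> \<open>(T, P)\<close>

definition Gamma_TP :: "state \<Rightarrow> state" where
  "Gamma_TP S = (let T = fst S; P = snd S in
     (({code \<phi> | \<phi>. sentence \<phi> \<and> sk T P \<phi>},
       {code \<phi> | \<phi>. sentence \<phi> \<and> sk T P (neg \<phi>)}),
      ({code \<phi> | \<phi>. sentence \<phi> \<and> scrP T P \<phi>},
       {code \<phi> | \<phi>. sentence \<phi> \<and> sk T P (Disj \<phi> (neg \<phi>))})))"

definition init_state :: state where
  "init_state = (({}, {}), ({}, {}))"

definition Union_state :: "state set \<Rightarrow> state" where
  "Union_state A = (((\<Union>S\<in>A. fst (fst S)), (\<Union>S\<in>A. snd (fst S))),
                    ((\<Union>S\<in>A. fst (snd S)), (\<Union>S\<in>A. snd (snd S))))"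

text \<open>Transfinite sequence indexed by the elements of an arbitrary well-order:
  the stage at a is (T_alpha, P_alpha) with alpha the order type of {b. b < a}.
  Zero and limit stages are the componentwise union of earlier stages
  (the empty union being ((empty,empty),(empty,empty))); successor stages apply Gamma.\<close>
definition stage :: "'a::wellorder \<Rightarrow> state" where
  "stage = wfrec {(x, y). x < y} (\<lambda>F a.
     if (\<exists>b. b < a \<and> (\<forall>c. c < a \<longrightarrow> c \<le> b))
     then Gamma_TP (F (THE b. b < a \<and> (\<forall>c. c < a \<longrightarrow> c \<le> b)))
     else Union_state (F ` {b. b < a}))"

end

(* Since P_0 is empty, a sentence phi with #phi in P_1^+ satisfies Pi, so phi or neg phi is a
   base paradoxical sentence psi. PA[SK] is sound in every consistent partial model; hence
   there psi forces #psi into T^- and neg psi forces #psi into T^+. By Kripke's monotonicity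
   argument every stage lies below its jump, so whatever is in T_alpha^+ (T_alpha^-) is already
   true (false) in (N, T_alpha, P_alpha). Thus psi true would make neg psi true as well, and vice
   versa, which consistency forbids. *)

theory Submission
  imports Defs "HOL-Library.Product_Order"
begin

fun trm_val :: "(nat \<Rightarrow> nat) \<Rightarrow> trm \<Rightarrow> nat" where
  "trm_val e (Var x) = e x"
| "trm_val e Zero = 0"
| "trm_val e (Sc t) = Suc (trm_val e t)"
| "trm_val e (Pl s t) = trm_val e s + trm_val e t"
| "trm_val e (Tm s t) = trm_val e s * trm_val e t"

(* Satisfaction under an assignment, needed because derivations contain free variables.
   Negative literals are read off the anti-extensions, so holds (neg phi) and holds phi
   exclude each other only in consistent models. *)
fun holds :: "ext \<Rightarrow> ext \<Rightarrow> (nat \<Rightarrow> nat) \<Rightarrow> fm \<Rightarrow> bool" where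
  "holds T P e (Eq s t) = (trm_val e s = trm_val e t)"
| "holds T P e (Neq s t) = (trm_val e s \<noteq> trm_val e t)"
| "holds T P e (Tr t) = (trm_val e t \<in> fst T)"
| "holds T P e (NTr t) = (trm_val e t \<in> snd T)"
| "holds T P e (Pr t) = (trm_val e t \<in> fst P)"
| "holds T P e (NPr t) = (trm_val e t \<in> snd P)"
| "holds T P e (Conj a b) = (holds T P e a \<and> holds T P e b)"
| "holds T P e (Disj a b) = (holds T P e a \<or> holds T P e b)"
| "holds T P e (All x a) = (\<forall>n. holds T P (e(x:=n)) a)"
| "holds T P e (Ex x a) = (\<exists>n. holds T P (e(x:=n)) a)"

lemma trm_val_num [simp]: "trm_val e (num n) = n"
  by (induction n) auto

lemma tval_eq_trm_val: "tval t = trm_val (\<lambda>_. 0) t"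
  by (induction t) auto

lemma fvt_num [simp]: "fvt (num n) = {}"
  by (induction n) auto

lemma neg_neg [simp]: "neg (neg \<phi>) = \<phi>"
  by (induction \<phi>) auto

lemma trm_val_substt: "trm_val e (substt x u t) = trm_val (e(x:=trm_val e u)) t"
  by (induction t) auto

lemma trm_val_cong: "\<forall>x\<in>fvt t. e x = e' x \<Longrightarrow> trm_val e t = trm_val e' t"
  by (induction t) auto

lemma trm_val_upd_nonfree: "y \<notin> fvt t \<Longrightarrow> trm_val (e(y:=n)) t = trm_val e t"
  by (rule trm_val_cong) auto

lemma holds_cong: "\<forall>x\<in>fv \<phi>. e x = e' x \<Longrightarrow> holds T P e \<phi> = holds T P e' \<phi>"
proof (induction \<phi> arbitrary: e e')
  case (All x a)
  have "holds T P (e(x:=n)) a = holds T P (e'(x:=n)) a" for n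
    by (rule All.IH) (use All.prems in auto)
  then show ?case by simp
next
  case (Ex x a)
  have "holds T P (e(x:=n)) a = holds T P (e'(x:=n)) a" for n
    by (rule Ex.IH) (use Ex.prems in auto)
  then show ?case by simp
qed (simp_all add: ball_Un, (metis trm_val_cong)+)

lemma holds_upd_nonfree: "y \<notin> fv \<phi> \<Longrightarrow> holds T P (e(y:=n)) \<phi> = holds T P e \<phi>"
  by (rule holds_cong) auto

lemma Ball_holds_upd_nonfree:
  "y \<notin> \<Union>(fv ` \<Gamma>) \<Longrightarrow> (\<forall>g\<in>\<Gamma>. holds T P (e(y:=n)) g) = (\<forall>g\<in>\<Gamma>. holds T P e g)"
  by (auto simp: holds_upd_nonfree)

lemma Bex_holds_upd_nonfree:
  "y \<notin> \<Union>(fv ` \<Delta>) \<Longrightarrow> (\<exists>d\<in>\<Delta>. holds T P (e(y:=n)) d) = (\<exists>d\<in>\<Delta>. holds T P e d)"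
  by (auto simp: holds_upd_nonfree)

lemma substt_nonfree: "x \<notin> fvt t \<Longrightarrow> substt x u t = t"
  by (induction t) auto

lemma subst_nonfree: "x \<notin> fv \<phi> \<Longrightarrow> subst x u \<phi> = \<phi>"
  by (induction \<phi>) (auto simp: substt_nonfree)

lemma freefor_closed: "fvt u = {} \<Longrightarrow> freefor x u \<phi>"
  by (induction \<phi>) auto

lemma holds_subst:
  "freefor x u \<phi> \<Longrightarrow> holds T P e (subst x u \<phi>) = holds T P (e(x:=trm_val e u)) \<phi>"
proof (induction \<phi> arbitrary: e)
  case (All y a)
  show ?case
  proof (cases "x \<in> fv (All y a)")
    case False
    then show ?thesis by (metis subst_nonfree holds_upd_nonfree)
  next
    case True
    with All.prems have yx: "y \<noteq> x" and yu: "y \<notin> fvt u" and "freefor x u a" by auto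
    then have "holds T P e (subst x u (All y a)) = (\<forall>n. holds T P (e(y:=n, x:=trm_val e u)) a)"
      by (simp only: subst.simps if_not_P[OF yx] if_False holds.simps All.IH trm_val_upd_nonfree[OF yu])
    then show ?thesis by (simp only: holds.simps fun_upd_twist[OF yx])
  qed
next
  case (Ex y a)
  show ?case
  proof (cases "x \<in> fv (Ex y a)")
    case False
    then show ?thesis by (metis subst_nonfree holds_upd_nonfree)
  next
    case True
    with Ex.prems have yx: "y \<noteq> x" and yu: "y \<notin> fvt u" and "freefor x u a" by auto
    then have "holds T P e (subst x u (Ex y a)) = (\<exists>n. holds T P (e(y:=n, x:=trm_val e u)) a)"
      by (simp only: subst.simps if_not_P[OF yx] if_False holds.simps Ex.IH trm_val_upd_nonfree[OF yu])
    then show ?thesis by (simp only: holds.simps fun_upd_twist[OF yx])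
  qed
qed (auto simp: trm_val_substt)

lemma holds_subst_num: "holds T P e (subst x (num n) \<phi>) = holds T P (e(x:=n)) \<phi>"
  by (simp add: holds_subst freefor_closed)

lemma holds_subst_eigenvar:
  assumes "freefor x (Var y) \<phi>" and "y \<notin> fv \<phi> - {x}"
  shows "holds T P (e(y:=n)) (subst x (Var y) \<phi>) = holds T P (e(x:=n)) \<phi>"
proof (cases "y = x")
  case False
  with assms(2) have "y \<notin> fv \<phi>" by simp
  then show ?thesis
    by (simp only: holds_subst[OF assms(1)] trm_val.simps fun_upd_same
        fun_upd_twist[OF False] holds_upd_nonfree[OF \<open>y \<notin> fv \<phi>\<close>])
qed (use assms(1) in \<open>simp add: holds_subst\<close>)

lemma holds_neg_imp_not_holds:
  "consistent T P \<Longrightarrow> holds T P e (neg \<phi>) \<Longrightarrow> \<not> holds T P e \<phi>"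
  by (induction \<phi> arbitrary: e) (auto simp: consistent_def)

lemma holds_if_sk: "sk T P \<phi> \<Longrightarrow> holds T P (\<lambda>_. 0) \<phi>"
  by (induction rule: sk.induct) (auto simp: tval_eq_trm_val holds_subst_num)

lemma sk_neg_imp_not_sk: "consistent T P \<Longrightarrow> sk T P (neg \<phi>) \<Longrightarrow> \<not> sk T P \<phi>"
  using holds_if_sk holds_neg_imp_not_holds by blast

lemma sk_Disj_iff: "sk T P (Disj a b) \<longleftrightarrow> sk T P a \<or> sk T P b"
proof
  assume "sk T P (Disj a b)"
  then show "sk T P a \<or> sk T P b" by (cases rule: sk.cases) auto
qed (auto intro: sk_disj1 sk_disj2)

lemma sk_mono: "sk T P \<phi> \<Longrightarrow> T \<le> T' \<Longrightarrow> P \<le> P' \<Longrightarrow> sk T' P' \<phi>"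
proof (induction rule: sk.induct)
  case (sk_all x a)
  then show ?case by (simp add: sk.sk_all)
qed (auto simp: less_eq_prod_def intro: sk.intros)

lemma sound_allR:
  assumes IH: "\<And>e. \<forall>g\<in>\<Gamma>. holds T P e g \<Longrightarrow> \<exists>d\<in>insert (subst x (Var y) \<phi>) \<Delta>. holds T P e d"
    and y_\<Gamma>: "y \<notin> \<Union>(fv ` \<Gamma>)" and y_\<Delta>: "y \<notin> \<Union>(fv ` \<Delta>)"
    and "y \<notin> fv (All x \<phi>)" and "freefor x (Var y) \<phi>"
    and \<Gamma>: "\<forall>g\<in>\<Gamma>. holds T P e g"
  shows "\<exists>d\<in>insert (All x \<phi>) \<Delta>. holds T P e d"
proof (cases "\<exists>d\<in>\<Delta>. holds T P e d")
  case False
  have "holds T P (e(x:=n)) \<phi>" for n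
  proof -
    have "\<forall>g\<in>\<Gamma>. holds T P (e(y:=n)) g"
      using \<Gamma> Ball_holds_upd_nonfree[OF y_\<Gamma>] by blast
    then have "\<exists>d\<in>insert (subst x (Var y) \<phi>) \<Delta>. holds T P (e(y:=n)) d"
      by (rule IH)
    then show ?thesis
      using False Bex_holds_upd_nonfree[OF y_\<Delta>] assms(4,5) by (simp add: holds_subst_eigenvar)
  qed
  then show ?thesis by simp
qed blast

lemma sound_exL:
  assumes IH: "\<And>e. \<forall>g\<in>insert (subst x (Var y) \<phi>) \<Gamma>. holds T P e g \<Longrightarrow> \<exists>d\<in>\<Delta>. holds T P e d"
    and y_\<Gamma>: "y \<notin> \<Union>(fv ` \<Gamma>)" and y_\<Delta>: "y \<notin> \<Union>(fv ` \<Delta>)"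
    and "y \<notin> fv (Ex x \<phi>)" and "freefor x (Var y) \<phi>"
    and \<Gamma>: "\<forall>g\<in>insert (Ex x \<phi>) \<Gamma>. holds T P e g"
  shows "\<exists>d\<in>\<Delta>. holds T P e d"
proof -
  from \<Gamma> obtain n where "holds T P (e(x:=n)) \<phi>" by auto
  then have "holds T P (e(y:=n)) (subst x (Var y) \<phi>)"
    using assms(4,5) by (simp add: holds_subst_eigenvar)
  moreover have "\<forall>g\<in>\<Gamma>. holds T P (e(y:=n)) g"
    using \<Gamma> Ball_holds_upd_nonfree[OF y_\<Gamma>] by simp
  ultimately have "\<exists>d\<in>\<Delta>. holds T P (e(y:=n)) d"
    using IH by simp
  then show ?thesis using Bex_holds_upd_nonfree[OF y_\<Delta>] by simp
qed

lemma sound_ind: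
  assumes IH: "\<And>e. \<forall>g\<in>insert \<phi> \<Gamma>. holds T P e g \<Longrightarrow>
      \<exists>d\<in>insert (subst x (Sc (Var x)) \<phi>) \<Delta>. holds T P e d"
    and x_\<Gamma>: "x \<notin> \<Union>(fv ` \<Gamma>)" and x_\<Delta>: "x \<notin> \<Union>(fv ` \<Delta>)"
    and "freefor x (Sc (Var x)) \<phi>" and "freefor x t \<phi>"
    and \<Gamma>: "\<forall>g\<in>insert (subst x Zero \<phi>) \<Gamma>. holds T P e g"
  shows "\<exists>d\<in>insert (subst x t \<phi>) \<Delta>. holds T P e d"
proof (cases "\<exists>d\<in>\<Delta>. holds T P e d")
  case False
  have base: "holds T P (e(x:=0)) \<phi>"
    using \<Gamma> holds_subst_num[of T P e x 0 \<phi>] by simp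
  have step: "holds T P (e(x:=Suc n)) \<phi>" if "holds T P (e(x:=n)) \<phi>" for n
  proof -
    have "\<forall>g\<in>insert \<phi> \<Gamma>. holds T P (e(x:=n)) g"
      using that \<Gamma> Ball_holds_upd_nonfree[OF x_\<Gamma>] by simp
    then have "\<exists>d\<in>insert (subst x (Sc (Var x)) \<phi>) \<Delta>. holds T P (e(x:=n)) d"
      by (rule IH)
    then show ?thesis
      using False Bex_holds_upd_nonfree[OF x_\<Delta>] holds_subst[OF assms(4)] by simp
  qed
  have "holds T P (e(x:=n)) \<phi>" for n
    using base step by (induction n) auto
  then show ?thesis by (simp add: holds_subst[OF assms(5)])
qed blast

lemma pa_sk_sound:
  assumes "pa_sk \<Gamma> \<Delta>" and "consistent T P" and "\<forall>g\<in>\<Gamma>. holds T P e g"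
  shows "\<exists>d\<in>\<Delta>. holds T P e d"
  using assms(1,3)
proof (induction arbitrary: e rule: pa_sk.induct)
  case (negL \<Gamma> \<phi> \<Delta>)
  then show ?case using holds_neg_imp_not_holds[OF assms(2)] by blast
next
  case (allL x t \<phi> \<Gamma> \<Delta>)
  then show ?case by (simp add: holds_subst)
next
  case (exR x t \<phi> \<Gamma> \<Delta>)
  then show ?case by (auto simp: holds_subst)
next
  case (allR y \<Gamma> \<Delta> x \<phi>)
  from allR.IH allR.hyps(1-4) allR.prems show ?case by (rule sound_allR)
next
  case (exL y \<Gamma> \<Delta> x \<phi>)
  from exL.IH exL.hyps(1-4) exL.prems show ?case by (rule sound_exL)
next
  case (repl x s \<phi> t \<Gamma> \<Delta>)
  then show ?case by (cases "trm_val e s = trm_val e t") (auto simp: holds_subst)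
next
  case (ind x \<Gamma> \<Delta> \<phi> t)
  from ind.IH ind.hyps(1-4) ind.prems show ?case by (rule sound_ind)
qed (auto, blast+)

lemma base_paradoxical_sk_imp_anti_extension:
  assumes "consistent T P" and "base_paradoxical \<psi>" and "sk T P \<psi>"
  shows "code \<psi> \<in> snd T"
proof -
  have "pa_sk {\<psi>} {NTr (quote \<psi>)}"
    using assms(2) unfolding base_paradoxical_def pa_sk_iff_def by simp
  with pa_sk_sound assms(1) holds_if_sk[OF assms(3)] show ?thesis
    by (fastforce simp: quote_def)
qed

lemma base_paradoxical_sk_neg_imp_extension:
  assumes "consistent T P" and "base_paradoxical \<psi>" and "sk T P (neg \<psi>)"
  shows "code \<psi> \<in> fst T"
proof -
  have "pa_sk {neg \<psi>} {Tr (quote \<psi>)}"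
    using assms(2) unfolding base_paradoxical_def pa_sk_iff_def by simp
  with pa_sk_sound assms(1) holds_if_sk[OF assms(3)] show ?thesis
    by (fastforce simp: quote_def)
qed

lemma code_inject [simp]: "code \<phi> = code \<psi> \<longleftrightarrow> \<phi> = \<psi>"
  by (simp add: code_def)

lemma sk_if_extension_le_Gamma_TP:
  "S \<le> Gamma_TP S \<Longrightarrow> code \<chi> \<in> fst (fst S) \<Longrightarrow> sk (fst S) (snd S) \<chi>"
  by (auto simp: less_eq_prod_def Gamma_TP_def Let_def)

lemma sk_neg_if_anti_extension_le_Gamma_TP:
  "S \<le> Gamma_TP S \<Longrightarrow> code \<chi> \<in> snd (fst S) \<Longrightarrow> sk (fst S) (snd S) (neg \<chi>)"
  by (auto simp: less_eq_prod_def Gamma_TP_def Let_def)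

lemma base_paradoxical_not_sk:
  assumes "consistent (fst S) (snd S)" and "S \<le> Gamma_TP S" and "base_paradoxical \<psi>"
  shows "\<not> sk (fst S) (snd S) \<psi>" and "\<not> sk (fst S) (snd S) (neg \<psi>)"
proof -
  show "\<not> sk (fst S) (snd S) \<psi>"
  proof
    assume "sk (fst S) (snd S) \<psi>"
    with assms(1,3) have "code \<psi> \<in> snd (fst S)"
      by (rule base_paradoxical_sk_imp_anti_extension)
    with assms(2) have "sk (fst S) (snd S) (neg \<psi>)"
      by (rule sk_neg_if_anti_extension_le_Gamma_TP)
    with \<open>sk (fst S) (snd S) \<psi>\<close> show False
      using sk_neg_imp_not_sk[OF assms(1)] by blast
  qed
  show "\<not> sk (fst S) (snd S) (neg \<psi>)"
  proof
    assume "sk (fst S) (snd S) (neg \<psi>)"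
    with assms(1,3) have "code \<psi> \<in> fst (fst S)"
      by (rule base_paradoxical_sk_neg_imp_extension)
    with assms(2) have "sk (fst S) (snd S) \<psi>"
      by (rule sk_if_extension_le_Gamma_TP)
    with \<open>sk (fst S) (snd S) (neg \<psi>)\<close> show False
      using sk_neg_imp_not_sk[OF assms(1)] by blast
  qed
qed

lemma Pi_par_not_sk_excluded_middle:
  assumes "consistent (fst S) (snd S)" and "S \<le> Gamma_TP S" and "Pi_par \<phi>"
  shows "\<not> sk (fst S) (snd S) (Disj \<phi> (neg \<phi>))"
  using assms(3) base_paradoxical_not_sk[OF assms(1,2)]
  unfolding Pi_par_def sk_Disj_iff by (metis neg_neg)

lemma scrP_mono: "scrP T P \<phi> \<Longrightarrow> T \<le> T' \<Longrightarrow> P \<le> P' \<Longrightarrow> scrP T' P' \<phi>"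
  by (auto simp: scrP_def less_eq_prod_def; blast)

lemma mono_Gamma_TP: "mono Gamma_TP"
proof
  fix S S' :: state
  assume "S \<le> S'"
  then have "sk (fst S) (snd S) \<phi> \<Longrightarrow> sk (fst S') (snd S') \<phi>"
    and "scrP (fst S) (snd S) \<phi> \<Longrightarrow> scrP (fst S') (snd S') \<phi>" for \<phi>
    by (auto simp: less_eq_prod_def intro: sk_mono scrP_mono)
  then show "Gamma_TP S \<le> Gamma_TP S'"
    by (auto simp: less_eq_prod_def Gamma_TP_def Let_def)
qed

lemma Union_state_eq_Sup: "Union_state A = Sup A"
  by (simp add: Union_state_def Sup_prod_def image_image)

lemma stage_unfold:
  fixes a :: "'a::wellorder"
  shows "stage a = (if \<exists>b. b < a \<and> (\<forall>c. c < a \<longrightarrow> c \<le> b)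
     then Gamma_TP (cut stage {(x, y). x < y} a (THE b. b < a \<and> (\<forall>c. c < a \<longrightarrow> c \<le> b)))
     else Union_state (cut stage {(x, y). x < y} a ` {b. b < a}))"
  unfolding stage_def by (subst wfrec[OF wf]) (simp only: cut_def)

lemma stage_succ:
  fixes a b :: "'a::wellorder"
  assumes "b < a" and "\<forall>c. c < a \<longrightarrow> c \<le> b"
  shows "stage a = Gamma_TP (stage b)"
proof -
  have "(THE b. b < a \<and> (\<forall>c. c < a \<longrightarrow> c \<le> b)) = b"
    using assms by (blast intro: the_equality order.antisym)
  with assms stage_unfold[of a] show ?thesis by (auto simp: cut_apply)
qed

lemma stage_limit:
  fixes a :: "'a::wellorder"
  assumes "\<not> (\<exists>b. b < a \<and> (\<forall>c. c < a \<longrightarrow> c \<le> b))"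
  shows "stage a = Sup (stage ` {b. b < a})"
proof -
  have "cut stage {(x, y). x < y} a ` {b. b < a} = stage ` {b. b < a}"
    by (rule image_cong) (auto simp: cut_apply)
  with stage_unfold[of a] show ?thesis
    by (simp only: if_not_P[OF assms] Union_state_eq_Sup)
qed

lemma stage_increasing:
  fixes a :: "'a::wellorder"
  shows "(\<forall>b<a. stage b \<le> stage a) \<and> stage a \<le> Gamma_TP (stage a)"
proof (induction a rule: less_induct)
  case (less a)
  show ?case
  proof (cases "\<exists>p. p < a \<and> (\<forall>c. c < a \<longrightarrow> c \<le> p)")
    case True
    then obtain p where p: "p < a" "\<forall>c. c < a \<longrightarrow> c \<le> p" by blast
    then have stage_a: "stage a = Gamma_TP (stage p)" by (rule stage_succ)
    have p_le_a: "stage p \<le> stage a"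
      using less[OF p(1)] stage_a by simp
    have "stage b \<le> stage a" if "b < a" for b
    proof (cases "b = p")
      case False
      with that p(2) have "b < p" by (simp add: order.not_eq_order_implies_strict)
      with less[OF p(1)] p_le_a show ?thesis by (blast intro: order_trans)
    qed (use p_le_a in simp)
    moreover have "stage a \<le> Gamma_TP (stage a)"
      using monoD[OF mono_Gamma_TP p_le_a] stage_a by simp
    ultimately show ?thesis by blast
  next
    case False
    then have stage_a: "stage a = Sup (stage ` {b. b < a})" by (rule stage_limit)
    then have below: "\<forall>b<a. stage b \<le> stage a" by (auto intro: Sup_upper)
    have "stage b \<le> Gamma_TP (stage a)" if "b < a" for b
    proof -
      have "stage b \<le> Gamma_TP (stage b)" using less[OF that] by simp
      also have "\<dots> \<le> Gamma_TP (stage a)" using monoD[OF mono_Gamma_TP] below that by blast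
      finally show ?thesis .
    qed
    then have "Sup (stage ` {b. b < a}) \<le> Gamma_TP (stage a)" by (auto intro: Sup_least)
    with stage_a below show ?thesis by simp
  qed
qed

lemma Pi_par_if_in_P1: "code \<phi> \<in> fst (snd (Gamma_TP init_state)) \<Longrightarrow> Pi_par \<phi>"
  by (auto simp: Gamma_TP_def init_state_def scrP_def Let_def)

theorem mainTheorem6:
  fixes a :: "'a::wellorder"
  assumes "consistent (fst (stage a)) (snd (stage a))"
  shows "\<forall>\<phi>. sentence \<phi> \<longrightarrow> code \<phi> \<in> fst (snd (Gamma_TP init_state)) \<longrightarrow>
           \<not> sk (fst (stage a)) (snd (stage a)) (Disj \<phi> (neg \<phi>))"
  using Pi_par_not_sk_excluded_middle[OF assms] stage_increasing Pi_par_if_in_P1 by blast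

end
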